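(* The language $L_3=\{\omega\in\{a,b,c\}^*:\ |\omega|_a=|\omega|_b=|\omega|_c\}$ is recognized by some QPA with probability $\frac23$: there is a QPA which accepts every $x\in L_3$ with probability at least $\frac23$ and rejects every $x\in\{a,b,c\}^*\setminus L_3$ with probability at least $\frac23$.
   Context: $|\omega|_i$ denotes the number of occurrences of the symbol $i$ in $\omega$. A QPA is a tuple $A=(Q,\Sigma,T,q_0,Q_a,Q_r,\delta)$ with $Q$ a finite set of states, $\Sigma$ a finite input alphabet, $T$ a finite stack alphabet, $q_0\in Q$, $Q_a,Q_r\subset Q$ disjoint, $\Gamma=\Sigma\cup\{\#,\$\}$ (end-markers), $\Delta=T\cup\{Z_0\}$ ($Z_0\notin T$ the stack base symbol), and $\delta:Q\times\Gamma\times\Delta\times Q\times\{\downarrow,\to\}\times\Delta^*\to\mathbb{C}$ such that whenever $\delta(q,\alpha,\beta,q',d,\omega)\ne0$: $|\omega|\le2$; if $|\omega|=2$ then $\omega_1=\beta$; if $\beta=Z_0$ then $\omega\in Z_0T^*$; if $\beta\ne Z_0$ then $\omega\in T^*$; and such that the evolution operator $U_A$ is unitary. A configuration is $|\nu_i q_j\nu_k,\omega_l\rangle$ with $q_j\in Q$, $\nu_i\nu_k\in\#\Sigma^*\$$, input head on the first symbol of $\nu_k$, $\omega_l\in Z_0T^*$ the stack with head on its last symbol; $C$ is the set of configurations, $H_A=\ell_2(C)$; for $c=|\nu_i q_j\sigma\nu_k,\omega_l\tau\rangle$, $U_A|c\rangle=\sum_{(q,d,\omega)}\delta(q_j,\sigma,\tau,q,d,\omega)|f(c,d,q),\omega_l\omega\rangle$,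 where $f(c,\downarrow,q)=\nu_i q\sigma\nu_k$, $f(c,\to,q)=\nu_i\sigma q\nu_k$. Recognition: $E_a,E_r,E_n$ are the subspaces spanned by configurations with state in $Q_a$, in $Q_r$, in neither; on input $x$ start in $|q_0\#x\$,Z_0\rangle$, repeatedly apply $U_A$ and measure w.r.t. $E_a\oplus E_r\oplus E_n$, halting on ``accept''/``reject'' and otherwise continuing from the normalized projection onto $E_n$; acceptance/rejection probability is the total probability of eventually halting with that outcome. *)

theory Defs
  imports "HOL-Analysis.Analysis"
begin

text \<open>Tape symbols Gamma = Sigma + end-markers: LM is the left end-marker (#), RM the right one ($).\<close>
datatype 's tsym = LM | RM | Sym 's

datatype stsym = Z0 | S nat

datatype dir = Stay | Right

text \<open>A QPA over input alphabet 's (Sigma = UNIV :: 's set). States and stack alphabet are finite sets of nats.\<close>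
record 's qpa =
  states :: "nat set"
  stk    :: "nat set"
  init   :: nat
  acc    :: "nat set"
  rej    :: "nat set"
  delta  :: "nat \<Rightarrow> 's tsym \<Rightarrow> stsym \<Rightarrow> nat \<Rightarrow> dir \<Rightarrow> stsym list \<Rightarrow> complex"

definition Delta_set :: "'s qpa \<Rightarrow> stsym set" where
  "Delta_set A = insert Z0 (S ` stk A)"

text \<open>Configurations |nu_i q nu_k, omega>: input word x (tape is # x $), head position p
  (0 = on #, length x + 1 = on $), state q, stack as a list (Z0 first, top = last element).\<close>
type_synonym 's cfg = "'s list \<times> nat \<times> nat \<times> stsym list"

definition tape :: "'s list \<Rightarrow> nat \<Rightarrow> 's tsym" where
  "tape x p = (if p = 0 then LM else if p \<le> length x then Sym (x ! (p - 1)) else RM)"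

definition cstate :: "'s cfg \<Rightarrow> nat" where
  "cstate c = fst (snd (snd c))"

definition configs :: "'s qpa \<Rightarrow> 's cfg set" where
  "configs A = {(x, p, q, s). p \<le> length x + 1 \<and> q \<in> states A \<and> s \<noteq> [] \<and> hd s = Z0
                 \<and> set (tl s) \<subseteq> S ` stk A}"

text \<open>Matrix entry <c'| U_A |c>.\<close>
fun amp :: "'s qpa \<Rightarrow> 's cfg \<Rightarrow> 's cfg \<Rightarrow> complex" where
  "amp A (x', p', q', s') (x, p, q, s) =
     (if x' = x \<and> s \<noteq> [] \<and> (p' = p \<or> p' = Suc p) \<and> length s \<le> length s' + 1
         \<and> take (length s - 1) s' = butlast s
      then delta A q (tape x p) (last s) q' (if p' = p then Stay else Right) (drop (length s - 1) s')
      else 0)"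

definition unitary_mat :: "'c set \<Rightarrow> ('c \<Rightarrow> 'c \<Rightarrow> complex) \<Rightarrow> bool" where
  "unitary_mat C M \<longleftrightarrow>
     (\<forall>c\<in>C. \<forall>d\<in>C. (\<Sum>\<^sub>\<infinity>e\<in>C. cnj (M e c) * M e d) = (if c = d then 1 else 0)) \<and>
     (\<forall>c\<in>C. \<forall>d\<in>C. (\<Sum>\<^sub>\<infinity>e\<in>C. M c e * cnj (M d e)) = (if c = d then 1 else 0))"

definition is_QPA :: "'s qpa \<Rightarrow> bool" where
  "is_QPA A \<longleftrightarrow>
     finite (states A) \<and> finite (stk A) \<and> init A \<in> states A \<and>
     acc A \<subseteq> states A \<and> rej A \<subseteq> states A \<and> acc A \<inter> rej A = {} \<and>
     (\<forall>q \<alpha> \<beta> q' d \<omega>. delta A q \<alpha> \<beta> q' d \<omega> \<noteq> 0 \<longrightarrow>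
        q \<in> states A \<and> q' \<in> states A \<and> \<beta> \<in> Delta_set A \<and> set \<omega> \<subseteq> Delta_set A \<and>
        length \<omega> \<le> 2 \<and>
        (length \<omega> = 2 \<longrightarrow> \<omega> ! 0 = \<beta>) \<and>
        (\<beta> = Z0 \<longrightarrow> \<omega> \<noteq> [] \<and> hd \<omega> = Z0 \<and> set (tl \<omega>) \<subseteq> S ` stk A) \<and>
        (\<beta> \<noteq> Z0 \<longrightarrow> set \<omega> \<subseteq> S ` stk A) \<and>
        (\<alpha> = RM \<longrightarrow> d = Stay)) \<and>
     unitary_mat (configs A) (amp A)"

definition Uapp :: "'s qpa \<Rightarrow> ('s cfg \<Rightarrow> complex) \<Rightarrow> ('s cfg \<Rightarrow> complex)" where
  "Uapp A \<psi> = (\<lambda>c'. \<Sum>\<^sub>\<infinity>c. amp A c' c * \<psi> c)"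

text \<open>Unnormalized non-halting part of the state after n steps on input x.\<close>
fun psi :: "'s qpa \<Rightarrow> 's list \<Rightarrow> nat \<Rightarrow> ('s cfg \<Rightarrow> complex)" where
  "psi A x 0 = (\<lambda>c. if c = (x, 0, init A, [Z0]) then 1 else 0)"
| "psi A x (Suc n) = (\<lambda>c. if cstate c \<notin> acc A \<union> rej A then Uapp A (psi A x n) c else 0)"

definition acc_prob :: "'s qpa \<Rightarrow> 's list \<Rightarrow> real" where
  "acc_prob A x = (\<Sum>n. \<Sum>\<^sub>\<infinity>c\<in>{c. cstate c \<in> acc A}. (cmod (Uapp A (psi A x n) c))\<^sup>2)"

definition rej_prob :: "'s qpa \<Rightarrow> 's list \<Rightarrow> real" where
  "rej_prob A x = (\<Sum>n. \<Sum>\<^sub>\<infinity>c\<in>{c. cstate c \<in> rej A}. (cmod (Uapp A (psi A x n) c))\<^sup>2)"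

datatype letter = La | Lb | Lc

definition L3 :: "letter list set" where
  "L3 = {w. count_list w La = count_list w Lb \<and> count_list w Lb = count_list w Lc}"

end

theory Submission
  imports Defs
begin

(* On the left end-marker the automaton splits into three branches of amplitude 1 / sqrt 3.
   Branch j is a reversible deterministic one-counter machine computing |w|_a - |w|_b,
   |w|_b - |w|_c and |w|_a - |w|_c respectively (magnitude in unary on the stack, sign in the
   control state); on the right end-marker it accepts iff its counter is zero. The branches never
   interfere, so the acceptance probability is one third of the number of vanishing counters:
   1 on L3, and at most 1/3 outside L3, since two vanishing differences force the third to vanish.
   U_A is unitary because it factors as a unitary acting on the control state alone (the
   branching), followed by the permutation of configurations given by the reversible step. *)

section \<open>Unitary matrices and superpositions\<close>

lemma infsum_supported_on_fiber:
  assumes inj: "inj_on (case_prod emb) (K \<times> Q)" and "finite Q" "k \<in> K"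
    and off_fiber: "\<And>l r. l \<in> K \<Longrightarrow> r \<in> Q \<Longrightarrow> l \<noteq> k \<Longrightarrow> h (emb l r) = 0"
  shows "(\<Sum>\<^sub>\<infinity>e \<in> case_prod emb ` (K \<times> Q). h e) = (\<Sum>r\<in>Q. h (emb k r))"
proof -
  have fiber: "emb k ` Q \<subseteq> case_prod emb ` (K \<times> Q)"
    using \<open>k \<in> K\<close> by force
  have "(\<Sum>\<^sub>\<infinity>e \<in> case_prod emb ` (K \<times> Q). h e) = (\<Sum>\<^sub>\<infinity>e \<in> emb k ` Q. h e)"
    by (rule infsum_cong_neutral) (use fiber off_fiber in auto)
  also have "\<dots> = (\<Sum>r\<in>Q. h (emb k r))"
  proof -
    have "inj_on (emb k) Q"
      using inj \<open>k \<in> K\<close> by (auto simp: inj_on_def)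
    then show ?thesis
      using \<open>finite Q\<close> by (simp add: sum.reindex)
  qed
  finally show ?thesis .
qed

lemma unitary_mat_block_diagonal:
  assumes inj: "inj_on (case_prod emb) (K \<times> Q)" and "finite Q"
    and blocks: "\<And>k. k \<in> K \<Longrightarrow> unitary_mat Q (m k)"
    and M: "\<And>k l q r. k \<in> K \<Longrightarrow> l \<in> K \<Longrightarrow> q \<in> Q \<Longrightarrow> r \<in> Q \<Longrightarrow>
              M (emb l r) (emb k q) = (if l = k then m k r q else 0)"
  shows "unitary_mat (case_prod emb ` (K \<times> Q)) M"
  unfolding unitary_mat_def
proof (intro conjI ballI; clarify)
  fix k q k' q' assume kq: "k \<in> K" "q \<in> Q" "k' \<in> K" "q' \<in> Q"
  have eq: "emb k q = emb k' q' \<longleftrightarrow> k = k' \<and> q = q'"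
    using inj kq by (auto simp: inj_on_def)
  have ortho: "(\<Sum>r\<in>Q. cnj (m k r q) * m k r q') = (if q = q' then 1 else 0)"
              "(\<Sum>r\<in>Q. m k q r * cnj (m k q' r)) = (if q = q' then 1 else 0)"
    using blocks[OF \<open>k \<in> K\<close>] kq \<open>finite Q\<close> by (auto simp: unitary_mat_def)
  show "(\<Sum>\<^sub>\<infinity>e \<in> case_prod emb ` (K \<times> Q). cnj (M e (emb k q)) * M e (emb k' q')) =
        (if emb k q = emb k' q' then 1 else 0)"
  proof (cases "k = k'")
    case True
    then show ?thesis
      using kq eq ortho(1) \<open>finite Q\<close>
      by (subst infsum_supported_on_fiber[OF inj \<open>finite Q\<close> \<open>k \<in> K\<close>]) (auto simp: M)
  next
    case False
    then show ?thesis
      using kq eq by (subst infsum_0) (auto simp: M)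
  qed
  show "(\<Sum>\<^sub>\<infinity>e \<in> case_prod emb ` (K \<times> Q). M (emb k q) e * cnj (M (emb k' q') e)) =
        (if emb k q = emb k' q' then 1 else 0)"
  proof (cases "k = k'")
    case True
    then show ?thesis
      using kq eq ortho(2) \<open>finite Q\<close>
      by (subst infsum_supported_on_fiber[OF inj \<open>finite Q\<close> \<open>k \<in> K\<close>]) (auto simp: M)
  next
    case False
    then show ?thesis
      using kq eq by (subst infsum_0) (auto simp: M)
  qed
qed

lemma unitary_mat_permute_rows:
  assumes "unitary_mat C M" and bij: "bij_betw g C C"
  shows "unitary_mat C (\<lambda>c' c. M (g c') c)"
  unfolding unitary_mat_def
proof (intro conjI ballI)
  fix c d assume cd: "c \<in> C" "d \<in> C"
  show "(\<Sum>\<^sub>\<infinity>e\<in>C. cnj (M (g e) c) * M (g e) d) = (if c = d then 1 else 0)"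
    using infsum_reindex_bij_betw[OF bij, of "\<lambda>e. cnj (M e c) * M e d"] assms(1) cd
    by (simp add: unitary_mat_def)
  have "g c \<in> C" "g d \<in> C" "g c = g d \<longleftrightarrow> c = d"
    using bij cd by (auto simp: bij_betw_def inj_on_def)
  then show "(\<Sum>\<^sub>\<infinity>e\<in>C. M (g c) e * cnj (M (g d) e)) = (if c = d then 1 else 0)"
    using assms(1) by (simp add: unitary_mat_def)
qed

lemma unitary_mat_cong:
  assumes "\<And>c d. c \<in> C \<Longrightarrow> d \<in> C \<Longrightarrow> M c d = N c d"
  shows "unitary_mat C M \<longleftrightarrow> unitary_mat C N"
  unfolding unitary_mat_def using assms by (simp cong: infsum_cong)

lemma Uapp_basis: "Uapp A (\<lambda>c. if c = c0 then 1 else 0) c' = amp A c' c0"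
proof -
  have "Uapp A (\<lambda>c. if c = c0 then 1 else 0) c' =
      (\<Sum>\<^sub>\<infinity>c\<in>{c0}. amp A c' c * (if c = c0 then 1 else 0))"
    unfolding Uapp_def by (rule infsum_cong_neutral) auto
  then show ?thesis by simp
qed

lemma Uapp_superposition:
  assumes "finite J"
  shows "Uapp A (\<lambda>c. \<Sum>j\<in>J. if c = D j then a j else 0) c' = (\<Sum>j\<in>J. a j * amp A c' (D j))"
proof -
  have "Uapp A (\<lambda>c. \<Sum>j\<in>J. if c = D j then a j else 0) c' =
        (\<Sum>\<^sub>\<infinity>c \<in> D ` J. amp A c' c * (\<Sum>j\<in>J. if c = D j then a j else 0))"
    unfolding Uapp_def by (rule infsum_cong_neutral) (auto intro!: sum.neutral)
  also have "\<dots> = (\<Sum>c \<in> D ` J. \<Sum>j\<in>J. if c = D j then a j * amp A c' (D j) else 0)"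
    using assms by (simp add: sum_distrib_left if_distrib mult.commute cong: if_cong)
  also have "\<dots> = (\<Sum>j\<in>J. a j * amp A c' (D j))"
    using assms by (subst sum.swap) (simp add: sum.delta')
  finally show ?thesis .
qed

lemma infsum_norm_superposition:
  assumes "finite J" "inj_on D J"
  shows "(\<Sum>\<^sub>\<infinity>c\<in>H. (cmod (\<Sum>j\<in>J. if c = D j then a j else 0))\<^sup>2) =
         (\<Sum>j\<in>J. if D j \<in> H then (cmod (a j))\<^sup>2 else 0)"
proof -
  let ?J = "{j \<in> J. D j \<in> H}"
  have at_D: "(\<Sum>i\<in>J. if D j = D i then a i else 0) = a j" if "j \<in> J" for j
    using assms that by (simp add: inj_on_eq_iff[OF assms(2)] sum.delta cong: if_cong)
  have "(\<Sum>\<^sub>\<infinity>c\<in>H. (cmod (\<Sum>j\<in>J. if c = D j then a j else 0))\<^sup>2) =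
        (\<Sum>\<^sub>\<infinity>c \<in> D ` ?J. (cmod (\<Sum>j\<in>J. if c = D j then a j else 0))\<^sup>2)"
    by (rule infsum_cong_neutral) (auto intro!: sum.neutral)
  also have "\<dots> = (\<Sum>j\<in>?J. (cmod (a j))\<^sup>2)"
    using assms at_D by (simp add: sum.reindex inj_on_subset[OF assms(2)])
  also have "\<dots> = (\<Sum>j\<in>J. if D j \<in> H then (cmod (a j))\<^sup>2 else 0)"
    using assms(1) by (simp add: sum.inter_filter)
  finally show ?thesis .
qed

section \<open>The automaton\<close>

definition counter_incr :: "nat \<Rightarrow> letter \<Rightarrow> int" where
  "counter_incr j \<sigma> = (case \<sigma> of
       La \<Rightarrow> (if j = 1 then 0 else 1)
     | Lb \<Rightarrow> (if j = 0 then -1 else if j = 1 then 1 else 0)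
     | Lc \<Rightarrow> (if j = 0 then 0 else -1))"

definition count_step :: "nat \<Rightarrow> letter \<Rightarrow> stsym \<Rightarrow> nat \<times> dir \<times> stsym list" where
  "count_step q \<sigma> b = (let k = counter_incr ((q - 3) mod 3) \<sigma> in
     if k = 0 then (q, Right, [b])
     else if k = 1 then
       (if q < 6 then (q, Right, [b, S 0])
        else if b = S 0 then (q, Right, []) else (q - 3, Right, [b]))
     else
       (if 6 \<le> q then (q, Right, [b, S 0])
        else if b = S 0 then (q, Right, []) else (q + 3, Right, [b])))"

(* States: 0, 1, 2 wait for the branching on the left end-marker; 3 + j and 6 + j run counter j
   with value v \<ge> 0 resp. v < 0, the stack holding Z0 followed by v resp. -v - 1 copies of S 0
   (see counter_cfg); 9 + j accept and 12 + j reject. All remaining transitions only serve to make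
   the step a bijection on configurations. *)
fun det_step :: "nat \<Rightarrow> letter tsym \<Rightarrow> stsym \<Rightarrow> nat \<times> dir \<times> stsym list" where
  "det_step q LM b =
    (if q < 3 then (if b = Z0 then (q + 3, Right, [Z0]) else (q, Stay, [b]))
     else if q < 6 then (if b = Z0 then (q - 3, Stay, [Z0]) else (q, Right, [b]))
     else if q < 9 then (q, Right, [b])
     else if b = Z0 then (q, Right, [Z0])
     else if b = S 0 then (q - 6, Stay, []) else (q, Stay, []))"
| "det_step q RM b =
    (if q < 3 then (q, Stay, [b])
     else if q < 6 then (if b = Z0 then (q + 6, Stay, [Z0, S 0]) else (q + 9, Stay, [b, S 0]))
     else if q < 9 then (q + 6, Stay, [b, S 1])
     else if q < 12 then (if b = Z0 then (q + 3, Stay, [Z0, S 0]) else (q, Stay, [b, S 0]))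
     else (q - 3, Stay, [b, S 1]))"
| "det_step q (Sym \<sigma>) b =
    (if q < 3 then (q, Stay, [b])
     else if q < 9 then count_step q \<sigma> b
     else if b = Z0 then (q, Right, [Z0]) else (q, Stay, [b]))"

definition stack_step :: "letter tsym \<Rightarrow> nat \<Rightarrow> stsym list \<Rightarrow> dir \<times> nat \<times> stsym list" where
  "stack_step \<alpha> q s = (case det_step q \<alpha> (last s) of (q', d, \<omega>) \<Rightarrow> (d, q', butlast s @ \<omega>))"

definition well_formed :: "nat \<Rightarrow> stsym list \<Rightarrow> bool" where
  "well_formed q s \<longleftrightarrow> q < 15 \<and> s \<noteq> [] \<and> hd s = Z0 \<and> set (tl s) \<subseteq> {S 0, S 1}"

(* With the head off the left end-marker, a configuration is reached by a right move iff
   entered_by_move holds; this tells step_perm_inv in which direction to undo the step. *)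
definition entered_by_move :: "nat \<Rightarrow> stsym list \<Rightarrow> bool" where
  "entered_by_move q s \<longleftrightarrow> (3 \<le> q \<and> q < 9) \<or> (9 \<le> q \<and> s = [Z0])"

definition undo_LM :: "nat \<Rightarrow> stsym list \<Rightarrow> nat \<times> stsym list" where
  "undo_LM q s = (if q < 3 then (if s = [Z0] then (q + 3, [Z0]) else (q, s))
     else if q < 9 then (q + 6, s @ [S 0]) else (q, s @ [S 1]))"

definition undo_Right :: "letter tsym \<Rightarrow> nat \<Rightarrow> stsym list \<Rightarrow> nat \<times> stsym list" where
  "undo_Right \<alpha> q s = (case \<alpha> of
      LM \<Rightarrow> (if 3 \<le> q \<and> q < 6 \<and> s = [Z0] then (q - 3, [Z0]) else (q, s))
    | RM \<Rightarrow> (q, s)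
    | Sym \<sigma> \<Rightarrow>
        (if q < 9 then
          (let k = counter_incr ((q - 3) mod 3) \<sigma> in
           if k = 0 then (q, s)
           else if k = 1 then
             (if q < 6 then (if last s = S 0 then (q, butlast s) else (q + 3, s))
              else (q, s @ [S 0]))
           else
             (if 6 \<le> q then (if last s = S 0 then (q, butlast s) else (q - 3, s))
              else (q, s @ [S 0])))
         else (q, s)))"

definition undo_Stay :: "letter tsym \<Rightarrow> nat \<Rightarrow> stsym list \<Rightarrow> nat \<times> stsym list" where
  "undo_Stay \<alpha> q s = (case \<alpha> of
      RM \<Rightarrow>
        (if q < 9 then (q, s)
         else if q < 12 then
           (if last s = S 1 then (q + 3, butlast s)
            else if butlast s = [Z0] then (q - 6, [Z0]) else (q, butlast s))
         else
           (if last s = S 1 then (q - 6, butlast s)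
            else if butlast s = [Z0] then (q - 3, [Z0]) else (q - 9, butlast s)))
    | _ \<Rightarrow> (q, s))"

lemma less_15_cases:
  "(q::nat) < 15 \<Longrightarrow> q = 0 \<or> q = 1 \<or> q = 2 \<or> q = 3 \<or> q = 4 \<or> q = 5 \<or> q = 6 \<or> q = 7 \<or> q = 8 \<or>
     q = 9 \<or> q = 10 \<or> q = 11 \<or> q = 12 \<or> q = 13 \<or> q = 14"
  by (simp add: less_Suc_eq numeral_eq_Suc)

lemma tsym_letter_cases: "\<alpha> = LM \<or> \<alpha> = RM \<or> \<alpha> = Sym La \<or> \<alpha> = Sym Lb \<or> \<alpha> = Sym Lc"
  by (metis letter.exhaust tsym.exhaust)

lemma det_step_wf:
  assumes "q < 15" "\<beta> = Z0 \<or> \<beta> = S 0 \<or> \<beta> = S 1"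
  shows "case det_step q \<alpha> \<beta> of (q', d, \<omega>) \<Rightarrow>
           q' < 15 \<and> set \<omega> \<subseteq> {Z0, S 0, S 1} \<and> length \<omega> \<le> 2 \<and> (length \<omega> = 2 \<longrightarrow> \<omega> ! 0 = \<beta>) \<and>
           (\<beta> = Z0 \<longrightarrow> \<omega> \<noteq> [] \<and> hd \<omega> = Z0 \<and> set (tl \<omega>) \<subseteq> {S 0, S 1}) \<and>
           (\<beta> \<noteq> Z0 \<longrightarrow> set \<omega> \<subseteq> {S 0, S 1}) \<and> (\<alpha> = RM \<longrightarrow> d = Stay)"
  using less_15_cases[OF assms(1)] tsym_letter_cases[of \<alpha>] assms(2)
  by (elim disjE) (simp_all add: count_step_def counter_incr_def Let_def)

lemma well_formed_state_less: "well_formed q s \<Longrightarrow> q < 15"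
  by (simp add: well_formed_def)

lemmas well_formed_state_cases = less_15_cases[OF well_formed_state_less]

lemma well_formed_snoc_cases:
  assumes "well_formed q s"
  shows "s = [Z0] \<or> (\<exists>v. s = v @ [S 0] \<and> well_formed q v) \<or> (\<exists>v. s = v @ [S 1] \<and> well_formed q v)"
proof (cases "tl s" rule: rev_exhaust)
  case Nil
  then show ?thesis using assms unfolding well_formed_def by (cases s) auto
next
  case (snoc ys y)
  then have "s = (Z0 # ys) @ [y]" using assms unfolding well_formed_def by (cases s) auto
  then show ?thesis using assms unfolding well_formed_def by auto
qed

lemma well_formed_snoc2_cases:
  assumes "well_formed q s"
  shows "s = [Z0] \<or> s = [Z0, S 0] \<or> s = [Z0, S 1] \<or>
    (\<exists>v. well_formed q v \<and>
       (s = v @ [S 0, S 0] \<or> s = v @ [S 0, S 1] \<or> s = v @ [S 1, S 0] \<or> s = v @ [S 1, S 1]))"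
  using well_formed_snoc_cases[OF assms]
  by (elim disjE exE conjE; use well_formed_snoc_cases in fastforce)

lemma well_formed_append_iff:
  "well_formed q v \<Longrightarrow> set w \<subseteq> {S 0, S 1} \<Longrightarrow> well_formed q' (v @ w) \<longleftrightarrow> q' < 15"
  unfolding well_formed_def by (cases v) auto

lemma stack_step_well_formed:
  assumes "well_formed q s" "stack_step \<alpha> q s = (d, q', s')"
  shows "well_formed q' s' \<and> (\<alpha> = RM \<longrightarrow> d = Stay)"
proof -
  obtain r e \<omega> where step: "det_step q \<alpha> (last s) = (r, e, \<omega>)"
    by (metis prod_cases3)
  then have s': "q' = r" "d = e" "s' = butlast s @ \<omega>"
    using assms(2) by (auto simp: stack_step_def)
  have "q < 15" using assms(1) by (simp add: well_formed_def)
  from well_formed_snoc_cases[OF assms(1)] show ?thesis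
  proof (elim disjE exE conjE)
    assume "s = [Z0]"
    then show ?thesis
      using det_step_wf[OF \<open>q < 15\<close>, of Z0 \<alpha>] step s' by (cases \<omega>) (auto simp: well_formed_def)
  next
    fix v assume "s = v @ [S 0]" "well_formed q v"
    then show ?thesis
      using det_step_wf[OF \<open>q < 15\<close>, of "S 0" \<alpha>] step s' by (simp add: well_formed_append_iff)
  next
    fix v assume "s = v @ [S 1]" "well_formed q v"
    then show ?thesis
      using det_step_wf[OF \<open>q < 15\<close>, of "S 1" \<alpha>] step s' by (simp add: well_formed_append_iff)
  qed
qed

lemma undo_LM_stack_step:
  assumes "well_formed q s"
  shows "case stack_step LM q s of (d, q', s') \<Rightarrow> d = Stay \<longrightarrow> undo_LM q' s' = (q, s)"
  using well_formed_snoc_cases[OF assms] well_formed_state_cases[OF assms] assms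
  by (elim disjE exE conjE) (simp_all add: butlast_append stack_step_def undo_LM_def)

lemma undo_Right_stack_step:
  assumes "well_formed q s" "\<alpha> \<noteq> RM"
  shows "case stack_step \<alpha> q s of (d, q', s') \<Rightarrow>
           d = Right \<longrightarrow> entered_by_move q' s' \<and> undo_Right \<alpha> q' s' = (q, s)"
  using well_formed_snoc_cases[OF assms(1)] well_formed_state_cases[OF assms(1)]
    tsym_letter_cases[of \<alpha>] assms
  by (elim disjE exE conjE)
    (simp_all add: butlast_append stack_step_def count_step_def counter_incr_def undo_Right_def
      entered_by_move_def)

lemma undo_Stay_stack_step:
  assumes "well_formed q s" "\<alpha> \<noteq> LM"
  shows "case stack_step \<alpha> q s of (d, q', s') \<Rightarrow>
           d = Stay \<longrightarrow> \<not> entered_by_move q' s' \<and> undo_Stay \<alpha> q' s' = (q, s)"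
  using well_formed_snoc_cases[OF assms(1)] well_formed_state_cases[OF assms(1)]
    tsym_letter_cases[of \<alpha>] assms
  by (elim disjE exE conjE)
    (simp_all add: butlast_append stack_step_def count_step_def counter_incr_def undo_Stay_def
      entered_by_move_def)

lemma stack_step_undo_LM:
  assumes "well_formed q s"
  shows "case undo_LM q s of (r, t) \<Rightarrow> well_formed r t \<and> stack_step LM r t = (Stay, q, s)"
  using well_formed_snoc_cases[OF assms] well_formed_state_cases[OF assms] assms
  by (elim disjE exE conjE)
    (simp_all add: butlast_append stack_step_def undo_LM_def well_formed_append_iff,
      simp_all add: well_formed_def)

lemma stack_step_undo_Right:
  assumes "well_formed q s" "entered_by_move q s" "\<alpha> \<noteq> RM"
  shows "case undo_Right \<alpha> q s of (r, t) \<Rightarrow> well_formed r t \<and> stack_step \<alpha> r t = (Right, q, s)"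
  using well_formed_snoc_cases[OF assms(1)] well_formed_state_cases[OF assms(1)]
    tsym_letter_cases[of \<alpha>] assms
  by (elim disjE exE conjE)
    (simp_all add: butlast_append stack_step_def count_step_def counter_incr_def undo_Right_def
      entered_by_move_def well_formed_append_iff,
      simp_all add: well_formed_def hd_append tl_append2)

lemma stack_step_undo_Stay:
  assumes "well_formed q s" "\<not> entered_by_move q s" "\<alpha> \<noteq> LM"
  shows "case undo_Stay \<alpha> q s of (r, t) \<Rightarrow> well_formed r t \<and> stack_step \<alpha> r t = (Stay, q, s)"
  using well_formed_snoc2_cases[OF assms(1)] well_formed_state_cases[OF assms(1)]
    tsym_letter_cases[of \<alpha>] assms
  by (elim disjE exE conjE)
    (simp_all add: butlast_append stack_step_def count_step_def counter_incr_def undo_Stay_def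
      entered_by_move_def well_formed_append_iff,
      simp_all add: well_formed_def hd_append tl_append2)

section \<open>Unitarity of the evolution\<close>

(* A real orthogonal matrix whose first column is (1, 1, 1) / sqrt 3: it creates the three
   branches from state 0. *)
definition branch_coef :: "nat \<Rightarrow> nat \<Rightarrow> real" where
  "branch_coef r q =
     (if q = 0 then sqrt (1/3)
      else if q = 1 then (if r = 0 then sqrt (1/2) else if r = 1 then - sqrt (1/2) else 0)
      else if r = 2 then - 2 * sqrt (1/6) else sqrt (1/6))"

definition branch_real :: "letter tsym \<Rightarrow> stsym \<Rightarrow> nat \<Rightarrow> nat \<Rightarrow> real" where
  "branch_real \<alpha> \<beta> r q =
     (if \<alpha> = LM \<and> \<beta> = Z0 \<and> r < 3 \<and> q < 3 then branch_coef r q else if r = q then 1 else 0)"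

definition branch_mat :: "letter tsym \<Rightarrow> stsym \<Rightarrow> nat \<Rightarrow> nat \<Rightarrow> complex" where
  "branch_mat \<alpha> \<beta> r q = complex_of_real (branch_real \<alpha> \<beta> r q)"

definition qpa_delta :: "nat \<Rightarrow> letter tsym \<Rightarrow> stsym \<Rightarrow> nat \<Rightarrow> dir \<Rightarrow> stsym list \<Rightarrow> complex" where
  "qpa_delta q \<alpha> \<beta> q' d \<omega> =
     (if q < 15 \<and> \<beta> \<in> {Z0, S 0, S 1}
      then \<Sum>r<15. branch_mat \<alpha> \<beta> r q * (if det_step r \<alpha> \<beta> = (q', d, \<omega>) then 1 else 0)
      else 0)"

definition L3_qpa :: "letter qpa" where
  "L3_qpa = \<lparr>states = {..<15}, stk = {0, 1}, init = 0, acc = {9, 10, 11}, rej = {12, 13, 14},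
             delta = qpa_delta\<rparr>"

lemma sum_less_15_expand:
  "(\<Sum>q::nat<15. f q) =
     f 0 + f 1 + f 2 + f 3 + f 4 + f 5 + f 6 + f 7 +
     f 8 + f 9 + f 10 + f 11 + f 12 + f 13 + (f 14 :: real)"
  by (simp add: numeral_eq_Suc)

lemma branch_real_orthogonal:
  assumes "a < 15" "b < 15"
  shows "(\<Sum>r<15. branch_real \<alpha> \<beta> r a * branch_real \<alpha> \<beta> r b) = (if a = b then 1 else 0)"
    and "(\<Sum>r<15. branch_real \<alpha> \<beta> a r * branch_real \<alpha> \<beta> b r) = (if a = b then 1 else 0)"
  using less_15_cases[OF assms(1)] less_15_cases[OF assms(2)]
  by (elim disjE; simp add: sum_less_15_expand branch_real_def branch_coef_def algebra_simps)+

lemma unitary_branch_mat: "unitary_mat {..<15} (branch_mat \<alpha> \<beta>)"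
proof -
  have "(\<Sum>r<15. cnj (branch_mat \<alpha> \<beta> r a) * branch_mat \<alpha> \<beta> r b) = (if a = b then 1 else 0)"
       "(\<Sum>r<15. branch_mat \<alpha> \<beta> a r * cnj (branch_mat \<alpha> \<beta> b r)) = (if a = b then 1 else 0)"
    if "a < 15" "b < 15" for a b
    using branch_real_orthogonal[OF that, of \<alpha> \<beta>] unfolding branch_mat_def
    by (simp_all flip: of_real_mult of_real_sum)
  then show ?thesis
    by (simp add: unitary_mat_def)
qed

definition step_perm :: "letter cfg \<Rightarrow> letter cfg" where
  "step_perm = (\<lambda>(x, p, q, s). case stack_step (tape x p) q s of
     (d, q', s') \<Rightarrow> (x, if d = Right then Suc p else p, q', s'))"

definition step_perm_inv :: "letter cfg \<Rightarrow> letter cfg" where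
  "step_perm_inv = (\<lambda>(x, p, q, s).
     if p = 0 then (case undo_LM q s of (r, t) \<Rightarrow> (x, 0, r, t))
     else if entered_by_move q s
       then (case undo_Right (tape x (p - 1)) q s of (r, t) \<Rightarrow> (x, p - 1, r, t))
     else (case undo_Stay (tape x p) q s of (r, t) \<Rightarrow> (x, p, r, t)))"

lemma mem_configs_L3_qpa: "(x, p, q, s) \<in> configs L3_qpa \<longleftrightarrow> p \<le> length x + 1 \<and> well_formed q s"
  unfolding configs_def L3_qpa_def well_formed_def by auto

lemma tape_eq_LM_iff: "tape x p = LM \<longleftrightarrow> p = 0"
  unfolding tape_def by auto

lemma tape_eq_RM_iff: "tape x p = RM \<longleftrightarrow> length x < p"
  unfolding tape_def by auto

lemma step_perm_in_configs:
  assumes "c \<in> configs L3_qpa"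
  shows "step_perm c \<in> configs L3_qpa"
proof -
  obtain x p q s where c: "c = (x, p, q, s)" by (cases c)
  obtain d q' s' where step: "stack_step (tape x p) q s = (d, q', s')" by (metis prod_cases3)
  have "well_formed q s" "p \<le> length x + 1" using assms c by (auto simp: mem_configs_L3_qpa)
  with stack_step_well_formed[OF _ step] have "well_formed q' s'" "d = Right \<Longrightarrow> p \<le> length x"
    by (auto simp: tape_eq_RM_iff)
  then show ?thesis
    using c step \<open>p \<le> length x + 1\<close> by (auto simp: step_perm_def mem_configs_L3_qpa)
qed

lemma step_perm_inv_step_perm:
  assumes "c \<in> configs L3_qpa"
  shows "step_perm_inv (step_perm c) = c"
proof -
  obtain x p q s where c: "c = (x, p, q, s)" by (cases c)
  obtain d q' s' where step: "stack_step (tape x p) q s = (d, q', s')" by (metis prod_cases3)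
  have "well_formed q s" using assms c by (simp add: mem_configs_L3_qpa)
  show ?thesis
  proof (cases d)
    case Stay
    show ?thesis
    proof (cases "p = 0")
      case True
      then have "tape x p = LM" by (simp add: tape_eq_LM_iff)
      then show ?thesis
        using undo_LM_stack_step[OF \<open>well_formed q s\<close>] Stay True c step
        by (simp add: step_perm_def step_perm_inv_def)
    next
      case False
      then have "tape x p \<noteq> LM" by (simp add: tape_eq_LM_iff)
      then show ?thesis
        using undo_Stay_stack_step[OF \<open>well_formed q s\<close>, of "tape x p"] Stay False c step
        by (simp add: step_perm_def step_perm_inv_def)
    qed
  next
    case Right
    then have "tape x p \<noteq> RM" using stack_step_well_formed[OF \<open>well_formed q s\<close> step] by auto
    then show ?thesis
      using undo_Right_stack_step[OF \<open>well_formed q s\<close>, of "tape x p"] Right c step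
      by (auto simp: step_perm_def step_perm_inv_def)
  qed
qed

lemma step_perm_step_perm_inv:
  assumes "c \<in> configs L3_qpa"
  shows "step_perm_inv c \<in> configs L3_qpa \<and> step_perm (step_perm_inv c) = c"
proof -
  obtain x p q s where c: "c = (x, p, q, s)" by (cases c)
  have v: "well_formed q s" "p \<le> length x + 1" using assms c by (auto simp: mem_configs_L3_qpa)
  consider "p = 0" | "p \<noteq> 0" "entered_by_move q s" | "p \<noteq> 0" "\<not> entered_by_move q s" by blast
  then show ?thesis
  proof cases
    case 1
    then show ?thesis using stack_step_undo_LM[OF v(1)] c v
      by (auto simp: step_perm_def step_perm_inv_def mem_configs_L3_qpa tape_def split: prod.splits)
  next
    case 2
    have "tape x (p - 1) \<noteq> RM" using v 2 by (simp add: tape_eq_RM_iff)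
    then show ?thesis using stack_step_undo_Right[OF v(1) 2(2), of "tape x (p - 1)"] 2 c v
      by (auto simp: step_perm_def step_perm_inv_def mem_configs_L3_qpa split: prod.splits)
  next
    case 3
    have "tape x p \<noteq> LM" using 3 by (simp add: tape_eq_LM_iff)
    then show ?thesis using stack_step_undo_Stay[OF v(1) 3(2), of "tape x p"] 3 c v
      by (auto simp: step_perm_def step_perm_inv_def mem_configs_L3_qpa split: prod.splits)
  qed
qed

lemma bij_step_perm_inv: "bij_betw step_perm_inv (configs L3_qpa) (configs L3_qpa)"
  by (rule bij_betwI[where g = step_perm])
    (auto simp: step_perm_in_configs step_perm_inv_step_perm step_perm_step_perm_inv)

lemma step_perm_inj:
  "c \<in> configs L3_qpa \<Longrightarrow> d \<in> configs L3_qpa \<Longrightarrow> step_perm c = step_perm d \<longleftrightarrow> c = d"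
  by (metis step_perm_inv_step_perm)

lemma step_perm_eq_iff:
  assumes "s \<noteq> []"
  shows "(x', p', q', s') = step_perm (x, p, r, s) \<longleftrightarrow>
    x' = x \<and> (p' = p \<or> p' = Suc p) \<and> length s \<le> length s' + 1 \<and> take (length s - 1) s' = butlast s \<and>
    det_step r (tape x p) (last s) = (q', if p' = p then Stay else Right, drop (length s - 1) s')"
proof -
  obtain q'' d \<omega> where step: "det_step r (tape x p) (last s) = (q'', d, \<omega>)"
    by (metis prod_cases3)
  have "step_perm (x, p, r, s) = (x, if d = Right then Suc p else p, q'', butlast s @ \<omega>)"
    by (simp add: step_perm_def stack_step_def step)
  moreover have "s' = butlast s @ \<omega> \<longleftrightarrow>
      length s \<le> length s' + 1 \<and> take (length s - 1) s' = butlast s \<and> drop (length s - 1) s' = \<omega>"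
    using append_eq_conv_conj[of "butlast s" \<omega> s'] assms by (auto dest: arg_cong[of _ _ length])
  ultimately show ?thesis
    using step by (cases d) auto
qed

lemma amp_L3_qpa:
  assumes "well_formed q s"
  shows "amp L3_qpa c' (x, p, q, s) =
    (\<Sum>r<15. branch_mat (tape x p) (last s) r q * (if c' = step_perm (x, p, r, s) then 1 else 0))"
proof -
  obtain x' p' q' s' where c': "c' = (x', p', q', s')" by (cases c')
  have "s \<noteq> []" "q < 15" using assms by (auto simp: well_formed_def)
  moreover have "last s \<in> {Z0, S 0, S 1}"
    using well_formed_snoc_cases[OF assms] by auto
  ultimately show ?thesis
    using step_perm_eq_iff[OF \<open>s \<noteq> []\<close>, of x' p' q' s' x p]
    by (auto simp: c' L3_qpa_def qpa_delta_def intro!: sum.cong)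
qed

definition branch_op :: "letter cfg \<Rightarrow> letter cfg \<Rightarrow> complex" where
  "branch_op = (\<lambda>(x', p', r, s') (x, p, q, s).
     if (x', p', s') = (x, p, s) then branch_mat (tape x p) (last s) r q else 0)"

lemma amp_step_perm:
  assumes f: "f \<in> configs L3_qpa" and c: "c \<in> configs L3_qpa"
  shows "amp L3_qpa (step_perm f) c = branch_op f c"
proof -
  obtain x p q s where c_def: "c = (x, p, q, s)" by (cases c)
  obtain x' p' q' s' where f_def: "f = (x', p', q', s')" by (cases f)
  have v: "well_formed q s" "p \<le> length x + 1" "q' < 15"
    using c f c_def f_def by (auto simp: mem_configs_L3_qpa well_formed_def)
  have "step_perm f = step_perm (x, p, r, s) \<longleftrightarrow> f = (x, p, r, s)" if "r < 15" for r
    using step_perm_inj[OF f, of "(x, p, r, s)"] v that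
    by (auto simp: mem_configs_L3_qpa well_formed_def)
  then have "amp L3_qpa (step_perm f) c =
      (\<Sum>r<15. if r = q'
                 then (if (x', p', s') = (x, p, s) then branch_mat (tape x p) (last s) q' q else 0)
                 else 0)"
    unfolding c_def amp_L3_qpa[OF v(1)] by (intro sum.cong) (auto simp: f_def)
  also have "\<dots> = branch_op f c"
    using v(3) by (simp add: branch_op_def c_def f_def)
  finally show ?thesis .
qed

lemma unitary_branch_op: "unitary_mat (configs L3_qpa) branch_op"
proof -
  define K where "K = {(x, p, s). (x, p, 0::nat, s) \<in> configs L3_qpa}"
  define emb :: "letter list \<times> nat \<times> stsym list \<Rightarrow> nat \<Rightarrow> letter cfg"
    where "emb = (\<lambda>(x, p, s) q. (x, p, q, s))"
  define m where "m = (\<lambda>(x, p, s). branch_mat (tape x p) (last s))"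
  have mem: "(x, p, q, s) \<in> configs L3_qpa \<longleftrightarrow> (x, p, s) \<in> K \<and> q < 15" for x p q s
    by (auto simp: K_def mem_configs_L3_qpa well_formed_def)
  have "configs L3_qpa = case_prod emb ` (K \<times> {..<15})"
  proof (intro equalityI subsetI)
    fix c assume "c \<in> configs L3_qpa"
    then obtain x p q s where "c = (x, p, q, s)" "(x, p, s) \<in> K" "q < 15"
      using mem by (cases c) blast
    then show "c \<in> case_prod emb ` (K \<times> {..<15})"
      by (intro image_eqI[of _ _ "((x, p, s), q)"]) (auto simp: emb_def)
  qed (auto simp: emb_def mem)
  moreover have "unitary_mat (case_prod emb ` (K \<times> {..<15})) branch_op"
  proof (rule unitary_mat_block_diagonal)
    show "inj_on (case_prod emb) (K \<times> {..<15})"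
      by (auto simp: inj_on_def emb_def)
    show "unitary_mat {..<15} (m k)" for k
      by (cases k rule: prod_cases3) (simp add: m_def unitary_branch_mat)
    show "branch_op (emb l r) (emb k q) = (if l = k then m k r q else 0)" for k l q r
      by (cases k rule: prod_cases3; cases l rule: prod_cases3)
        (simp add: emb_def m_def branch_op_def)
  qed simp
  ultimately show ?thesis by simp
qed

lemma unitary_amp_L3_qpa: "unitary_mat (configs L3_qpa) (amp L3_qpa)"
proof -
  have "amp L3_qpa c' c = branch_op (step_perm_inv c') c"
    if "c' \<in> configs L3_qpa" "c \<in> configs L3_qpa" for c' c
    using amp_step_perm[of "step_perm_inv c'" c] step_perm_step_perm_inv[of c'] that by simp
  then have "unitary_mat (configs L3_qpa) (amp L3_qpa) \<longleftrightarrow>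
      unitary_mat (configs L3_qpa) (\<lambda>c' c. branch_op (step_perm_inv c') c)"
    by (rule unitary_mat_cong)
  then show ?thesis
    using unitary_mat_permute_rows[OF unitary_branch_op bij_step_perm_inv] by simp
qed

lemma qpa_delta_nonzero:
  assumes "qpa_delta q \<alpha> \<beta> q' d \<omega> \<noteq> 0"
  shows "q < 15 \<and> (\<beta> = Z0 \<or> \<beta> = S 0 \<or> \<beta> = S 1) \<and> (\<exists>r<15. det_step r \<alpha> \<beta> = (q', d, \<omega>))"
proof -
  have "q < 15 \<and> \<beta> \<in> {Z0, S 0, S 1}"
    using assms by (auto simp: qpa_delta_def split: if_splits)
  moreover have "\<exists>r<15. det_step r \<alpha> \<beta> = (q', d, \<omega>)"
  proof (rule ccontr)
    assume "\<not> ?thesis"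
    then have "qpa_delta q \<alpha> \<beta> q' d \<omega> = 0" by (simp add: qpa_delta_def)
    with assms show False ..
  qed
  ultimately show ?thesis by simp
qed

lemma is_QPA_L3_qpa: "is_QPA L3_qpa"
proof -
  have stk: "S ` stk L3_qpa = {S 0, S 1}" "Delta_set L3_qpa = {Z0, S 0, S 1}"
    "states L3_qpa = {..<15}"
    by (auto simp: Delta_set_def L3_qpa_def)
  have transitions: "\<forall>q \<alpha> \<beta> q' d \<omega>. delta L3_qpa q \<alpha> \<beta> q' d \<omega> \<noteq> 0 \<longrightarrow>
        q \<in> states L3_qpa \<and> q' \<in> states L3_qpa \<and> \<beta> \<in> Delta_set L3_qpa \<and> set \<omega> \<subseteq> Delta_set L3_qpa \<and>
        length \<omega> \<le> 2 \<and> (length \<omega> = 2 \<longrightarrow> \<omega> ! 0 = \<beta>) \<and>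
        (\<beta> = Z0 \<longrightarrow> \<omega> \<noteq> [] \<and> hd \<omega> = Z0 \<and> set (tl \<omega>) \<subseteq> S ` stk L3_qpa) \<and>
        (\<beta> \<noteq> Z0 \<longrightarrow> set \<omega> \<subseteq> S ` stk L3_qpa) \<and> (\<alpha> = RM \<longrightarrow> d = Stay)"
    (is "\<forall>q \<alpha> \<beta> q' d \<omega>. _ \<longrightarrow> ?wf q \<alpha> \<beta> q' d \<omega>")
  proof (intro allI impI)
    fix q \<alpha> \<beta> q' d \<omega>
    assume "delta L3_qpa q \<alpha> \<beta> q' d \<omega> \<noteq> 0"
    then have "qpa_delta q \<alpha> \<beta> q' d \<omega> \<noteq> 0"
      by (simp add: L3_qpa_def)
    then obtain r where r: "r < 15" "det_step r \<alpha> \<beta> = (q', d, \<omega>)"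
      and "q < 15" and \<beta>: "\<beta> = Z0 \<or> \<beta> = S 0 \<or> \<beta> = S 1"
      using qpa_delta_nonzero by blast
    moreover have "\<beta> \<in> {Z0, S 0, S 1}"
      using \<beta> by blast
    ultimately show "?wf q \<alpha> \<beta> q' d \<omega>"
      using det_step_wf[OF r(1) \<beta>, of \<alpha>] stk by simp
  qed
  have basics: "finite (states L3_qpa)" "finite (stk L3_qpa)" "init L3_qpa \<in> states L3_qpa"
    "acc L3_qpa \<subseteq> states L3_qpa" "rej L3_qpa \<subseteq> states L3_qpa" "acc L3_qpa \<inter> rej L3_qpa = {}"
    by (simp_all add: L3_qpa_def)
  show ?thesis
    unfolding is_QPA_def using basics transitions unitary_amp_L3_qpa by (intro conjI) assumption+
qed

section \<open>Runs and halting probabilities\<close>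

definition counter :: "nat \<Rightarrow> letter list \<Rightarrow> int" where
  "counter j w = sum_list (map (counter_incr j) w)"

definition counter_cfg :: "nat \<Rightarrow> int \<Rightarrow> nat \<times> stsym list" where
  "counter_cfg j v = (if 0 \<le> v then (3 + j, Z0 # replicate (nat v) (S 0))
                      else (6 + j, Z0 # replicate (nat (- v - 1)) (S 0)))"

lemma counter_snoc: "counter j (w @ [\<sigma>]) = counter j w + counter_incr j \<sigma>"
  by (simp add: counter_def)

lemma counter_letter_counts:
  "counter 0 w = int (count_list w La) - int (count_list w Lb)"
  "counter 1 w = int (count_list w Lb) - int (count_list w Lc)"
  "counter 2 w = int (count_list w La) - int (count_list w Lc)"
  by (induct w; simp add: counter_def counter_incr_def split: letter.split)+

lemma counter_cfg_well_formed: "j < 3 \<Longrightarrow> counter_cfg j v = (q, s) \<Longrightarrow> well_formed q s \<and> 3 \<le> q \<and> q < 9"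
  by (auto simp: counter_cfg_def well_formed_def split: if_splits)

lemma replicate_Suc_snoc: "replicate (Suc n) b = replicate n b @ [b]"
  by (simp add: replicate_append_same)

lemma stack_step_counter_cfg:
  assumes "j < 3"
    and "counter_cfg j v = (q, s)"
  shows "stack_step (Sym \<sigma>) q s = (Right, counter_cfg j (v + counter_incr j \<sigma>))"
proof -
  have incr: "counter_incr j \<sigma> = 0 \<or> counter_incr j \<sigma> = 1 \<or> counter_incr j \<sigma> = -1"
    by (cases \<sigma>) (auto simp: counter_incr_def)
  have j: "(3 + j - 3) mod 3 = j" "(6 + j - 3) mod 3 = j"
    using assms by auto
  consider (pos) n where "v = int n + 1" | (zero) "v = 0" | (minus_one) "v = -1"
    | (neg) n where "v = - int n - 2"
  proof -
    have "v \<ge> 1 \<or> v = 0 \<or> v = -1 \<or> v \<le> -2" by arith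
    then show ?thesis using that(1)[of "nat (v - 1)"] that(2,3) that(4)[of "nat (- v - 2)"] by auto
  qed
  then show ?thesis
  proof cases
    case pos
    then have "nat v = Suc n" "nat (v + 1) = Suc (Suc n)" "nat (v - 1) = n" by auto
    then show ?thesis using incr j pos assms(2)
      by (auto simp del: replicate.simps
          simp: counter_cfg_def stack_step_def count_step_def replicate_Suc_snoc)
  next
    case zero
    then show ?thesis using incr j assms(2)
      by (auto simp: counter_cfg_def stack_step_def count_step_def)
  next
    case minus_one
    then show ?thesis using incr j assms(2)
      by (auto simp: counter_cfg_def stack_step_def count_step_def)
  next
    case neg
    then have "nat (- v - 1) = Suc n" "nat (- (v + 1) - 1) = n" "nat (- (v - 1) - 1) = Suc (Suc n)"
      by auto
    then show ?thesis using incr j neg assms(2)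
      by (auto simp del: replicate.simps
          simp: counter_cfg_def stack_step_def count_step_def replicate_Suc_snoc)
  qed
qed

lemma stack_step_RM_counter_cfg:
  assumes "j < 3"
    and "counter_cfg j v = (q, s)"
  shows "\<exists>s'. stack_step RM q s = (Stay, if v = 0 then 9 + j else 12 + j, s')"
proof -
  consider (pos) n where "v = int n + 1" | (zero) "v = 0" | (neg) "v < 0"
  proof -
    have "v \<ge> 1 \<or> v = 0 \<or> v < 0" by arith
    then show ?thesis using that(1)[of "nat (v - 1)"] that(2,3) by auto
  qed
  then show ?thesis
  proof cases
    case pos
    then have "nat v = Suc n" by auto
    then show ?thesis using pos assms
      by (auto simp del: replicate.simps simp: counter_cfg_def stack_step_def replicate_Suc_snoc)
  qed (use assms in \<open>auto simp: counter_cfg_def stack_step_def\<close>)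
qed

definition branches :: "(nat \<Rightarrow> 'c) \<Rightarrow> 'c \<Rightarrow> complex" where
  "branches D c = (\<Sum>j<3. if c = D j then complex_of_real (sqrt (1/3)) else 0)"

lemma branches_eq_0: "(\<And>j. j < 3 \<Longrightarrow> c \<noteq> D j) \<Longrightarrow> branches D c = 0"
  by (auto simp: branches_def intro!: sum.neutral)

lemma branches_cong: "(\<And>j. j < 3 \<Longrightarrow> D j = E j) \<Longrightarrow> branches D = branches E"
  unfolding branches_def by (intro ext sum.cong) auto

lemma branches_restrict:
  "(\<And>j. j < 3 \<Longrightarrow> P (D j)) \<Longrightarrow> (\<lambda>c. if P c then branches D c else 0) = branches D"
  "(\<And>j. j < 3 \<Longrightarrow> \<not> P (D j)) \<Longrightarrow> (\<lambda>c. if P c then branches D c else 0) = (\<lambda>c. 0)"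
  by (auto simp: fun_eq_iff intro!: branches_eq_0)

lemma amp_L3_qpa_off_LM:
  assumes "well_formed q s" "p \<noteq> 0"
  shows "amp L3_qpa c' (x, p, q, s) = (if c' = step_perm (x, p, q, s) then 1 else 0)"
proof -
  have "tape x p \<noteq> LM" using assms(2) by (simp add: tape_eq_LM_iff)
  then have "amp L3_qpa c' (x, p, q, s) =
      (\<Sum>r<15. if r = q then (if c' = step_perm (x, p, q, s) then 1 else 0) else 0)"
    unfolding amp_L3_qpa[OF assms(1)]
    by (intro sum.cong) (auto simp: branch_mat_def branch_real_def)
  then show ?thesis
    using well_formed_state_less[OF assms(1)] by simp
qed

lemma Uapp_L3_qpa_branches:
  assumes "\<And>j. j < 3 \<Longrightarrow> D j \<in> configs L3_qpa \<and> fst (snd (D j)) \<noteq> 0"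
  shows "Uapp L3_qpa (branches D) = branches (\<lambda>j. step_perm (D j))"
proof
  fix c'
  have "amp L3_qpa c' (D j) = (if c' = step_perm (D j) then 1 else 0)" if "j < 3" for j
    using assms[OF that] amp_L3_qpa_off_LM by (cases "D j") (auto simp: mem_configs_L3_qpa)
  then show "Uapp L3_qpa (branches D) c' = branches (\<lambda>j. step_perm (D j)) c'"
    unfolding branches_def Uapp_superposition[OF finite_lessThan] by (intro sum.cong) auto
qed

definition path_cfg :: "letter list \<Rightarrow> nat \<Rightarrow> nat \<Rightarrow> letter cfg" where
  "path_cfg x k j = (case counter_cfg j (counter j (take (k - 1) x)) of (q, s) \<Rightarrow> (x, k, q, s))"

definition final_cfg :: "letter list \<Rightarrow> nat \<Rightarrow> letter cfg" where
  "final_cfg x j = step_perm (path_cfg x (Suc (length x)) j)"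

lemma path_cfg_in_configs:
  "j < 3 \<Longrightarrow> k \<le> length x + 1 \<Longrightarrow> path_cfg x k j \<in> configs L3_qpa"
  by (cases "counter_cfg j (counter j (take (k - 1) x))")
    (auto simp: path_cfg_def mem_configs_L3_qpa dest: counter_cfg_well_formed)

lemma cstate_path_cfg: "j < 3 \<Longrightarrow> 3 \<le> cstate (path_cfg x k j) \<and> cstate (path_cfg x k j) < 9"
  by (cases "counter_cfg j (counter j (take (k - 1) x))")
    (auto simp: path_cfg_def cstate_def dest: counter_cfg_well_formed)

lemma step_perm_path_cfg:
  assumes "j < 3" "1 \<le> k" "k \<le> length x"
  shows "step_perm (path_cfg x k j) = path_cfg x (Suc k) j"
proof -
  obtain q s where qs: "counter_cfg j (counter j (take (k - 1) x)) = (q, s)"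
    by (metis surj_pair)
  have "tape x k = Sym (x ! (k - 1))" "take k x = take (k - 1) x @ [x ! (k - 1)]"
    using assms by (auto simp: tape_def take_Suc_conv_app_nth[symmetric])
  then show ?thesis
    using stack_step_counter_cfg[OF assms(1) qs, of "x ! (k - 1)"] qs
    by (simp add: step_perm_def path_cfg_def counter_snoc)
qed

lemma cstate_final_cfg:
  "j < 3 \<Longrightarrow> cstate (final_cfg x j) = (if counter j x = 0 then 9 + j else 12 + j)"
  using stack_step_RM_counter_cfg[of j "counter j x"]
  by (cases "counter_cfg j (counter j x)")
    (auto simp: final_cfg_def path_cfg_def step_perm_def cstate_def tape_def)

lemma inj_final_cfg: "inj_on (final_cfg x) {..<3}"
proof (rule inj_onI)
  fix i j assume "i \<in> {..<3}" "j \<in> {..<3}" "final_cfg x i = final_cfg x j"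
  then have "i < 3" "j < 3" "cstate (final_cfg x i) = cstate (final_cfg x j)"
    by simp_all
  then show "i = j"
    unfolding cstate_final_cfg[OF \<open>i < 3\<close>] cstate_final_cfg[OF \<open>j < 3\<close>]
    by (simp split: if_splits)
qed

lemma Uapp_psi_0: "Uapp L3_qpa (psi L3_qpa x 0) = branches (path_cfg x 1)"
proof
  fix c'
  have "well_formed 0 [Z0]" by (simp add: well_formed_def)
  have "amp L3_qpa c' (x, 0, 0, [Z0]) =
      (\<Sum>r<3. branch_mat (tape x 0) (last [Z0]) r 0 *
                (if c' = step_perm (x, 0, r, [Z0]) then 1 else 0))"
    unfolding amp_L3_qpa[OF \<open>well_formed 0 [Z0]\<close>]
    by (rule sum.mono_neutral_right) (auto simp: tape_def branch_mat_def branch_real_def)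
  also have "\<dots> = branches (path_cfg x 1) c'"
    unfolding branches_def
    by (intro sum.cong) (auto simp: tape_def branch_mat_def branch_real_def branch_coef_def
        step_perm_def stack_step_def path_cfg_def counter_def counter_cfg_def)
  finally show "Uapp L3_qpa (psi L3_qpa x 0) c' = branches (path_cfg x 1) c'"
    by (simp add: Uapp_basis L3_qpa_def)
qed

lemma Uapp_psi_L3_qpa:
  "Uapp L3_qpa (psi L3_qpa x n) =
     (if n \<le> length x then branches (path_cfg x (Suc n))
      else if n = Suc (length x) then branches (final_cfg x) else (\<lambda>c. 0))"
proof (induction n)
  case 0
  then show ?case by (simp del: psi.simps add: Uapp_psi_0)
next
  case (Suc n)
  let ?running = "\<lambda>c. cstate c \<notin> acc L3_qpa \<union> rej L3_qpa"
  have running_path: "?running (path_cfg x k j)" if "j < 3" for k j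
    using cstate_path_cfg[OF that, of x k] by (auto simp: L3_qpa_def)
  have final_halted: "\<not> ?running (final_cfg x j)" if "j < 3" for j
    using cstate_final_cfg[OF that, of x] that by (auto simp: L3_qpa_def)
  have moves: "path_cfg x k j \<in> configs L3_qpa \<and> fst (snd (path_cfg x k j)) \<noteq> 0"
    if "j < 3" "1 \<le> k" "k \<le> length x + 1" for k j
    using path_cfg_in_configs[OF that(1,3)] that(2)
    by (auto simp: path_cfg_def split: prod.splits)
  consider (running) "n \<le> length x" | (halted) "Suc (length x) \<le> n" by linarith
  then show ?case
  proof cases
    case running
    have "psi L3_qpa x (Suc n) = (\<lambda>c. if ?running c then branches (path_cfg x (Suc n)) c else 0)"
      using Suc.IH running by (simp cong: if_cong)
    also have "\<dots> = branches (path_cfg x (Suc n))"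
      using running_path by (intro branches_restrict(1))
    finally have psi_Suc: "psi L3_qpa x (Suc n) = branches (path_cfg x (Suc n))" .
    have "Uapp L3_qpa (psi L3_qpa x (Suc n)) = branches (\<lambda>j. step_perm (path_cfg x (Suc n) j))"
      unfolding psi_Suc using moves running by (intro Uapp_L3_qpa_branches) simp
    also have "\<dots> = (if Suc n \<le> length x then branches (path_cfg x (Suc (Suc n)))
                       else branches (final_cfg x))"
    proof (cases "Suc n \<le> length x")
      case False
      then have "n = length x" using running by simp
      then show ?thesis by (auto simp: final_cfg_def intro!: branches_cong)
    qed (auto simp: step_perm_path_cfg intro!: branches_cong)
    finally show ?thesis
      using running by simp
  next
    case halted
    have "psi L3_qpa x (Suc n) = (\<lambda>c. 0)"
    proof (cases "n = Suc (length x)")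
      case True
      then have "psi L3_qpa x (Suc n) = (\<lambda>c. if ?running c then branches (final_cfg x) c else 0)"
        using Suc.IH by (simp cong: if_cong)
      also have "\<dots> = (\<lambda>c. 0)"
        using final_halted by (intro branches_restrict(2))
      finally show ?thesis .
    next
      case False
      then show ?thesis using Suc.IH halted by (simp cong: if_cong)
    qed
    then show ?thesis
      using halted by (simp add: Uapp_def)
  qed
qed

lemma halting_prob_L3_qpa:
  assumes "\<forall>q\<in>H. 9 \<le> q"
  shows "(\<Sum>n. \<Sum>\<^sub>\<infinity>c\<in>{c. cstate c \<in> H}. (cmod (Uapp L3_qpa (psi L3_qpa x n) c))\<^sup>2) =
         (\<Sum>j<3. if cstate (final_cfg x j) \<in> H then 1/3 else 0)"
proof -
  have "(\<Sum>\<^sub>\<infinity>c\<in>{c. cstate c \<in> H}. (cmod (Uapp L3_qpa (psi L3_qpa x n) c))\<^sup>2) = 0"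
    if "n \<noteq> Suc (length x)" for n
  proof (rule infsum_0)
    fix c :: "letter cfg" assume "c \<in> {c. cstate c \<in> H}"
    then have "c \<noteq> path_cfg x (Suc n) j" if "j < 3" for j
      using assms cstate_path_cfg[OF that, of x "Suc n"] by auto
    then show "(cmod (Uapp L3_qpa (psi L3_qpa x n) c))\<^sup>2 = 0"
      using that by (simp del: psi.simps add: Uapp_psi_L3_qpa branches_eq_0)
  qed
  then have "(\<Sum>n. \<Sum>\<^sub>\<infinity>c\<in>{c. cstate c \<in> H}. (cmod (Uapp L3_qpa (psi L3_qpa x n) c))\<^sup>2) =
      (\<Sum>\<^sub>\<infinity>c\<in>{c. cstate c \<in> H}. (cmod (branches (final_cfg x) c))\<^sup>2)"
    by (subst suminf_finite[of "{Suc (length x)}"]) (auto simp del: psi.simps simp: Uapp_psi_L3_qpa)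
  also have "\<dots> = (\<Sum>j<3. if cstate (final_cfg x j) \<in> H then 1/3 else 0)"
    unfolding branches_def infsum_norm_superposition[OF finite_lessThan inj_final_cfg]
    by (simp cong: if_cong)
  finally show ?thesis .
qed

lemma acc_prob_L3_qpa: "acc_prob L3_qpa x = (\<Sum>j<3. if counter j x = 0 then 1/3 else 0)"
  unfolding acc_prob_def
  by (subst halting_prob_L3_qpa) (auto simp: L3_qpa_def cstate_final_cfg intro!: sum.cong)

lemma rej_prob_L3_qpa: "rej_prob L3_qpa x = (\<Sum>j<3. if counter j x = 0 then 0 else 1/3)"
  unfolding rej_prob_def
  by (subst halting_prob_L3_qpa) (auto simp: L3_qpa_def cstate_final_cfg intro!: sum.cong)

theorem theorem4:
  shows "\<exists>A :: letter qpa. is_QPA A \<and>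
           (\<forall>x. x \<in> L3 \<longrightarrow> acc_prob A x \<ge> 2/3) \<and>
           (\<forall>x. x \<notin> L3 \<longrightarrow> rej_prob A x \<ge> 2/3)"
proof (intro exI[of _ L3_qpa] conjI allI impI)
  show "is_QPA L3_qpa" by (rule is_QPA_L3_qpa)
next
  fix x assume "x \<in> L3"
  then have "counter 0 x = 0" "counter 1 x = 0" "counter 2 x = 0"
    using counter_letter_counts[of x] by (auto simp: L3_def)
  then show "acc_prob L3_qpa x \<ge> 2/3"
    by (simp add: acc_prob_L3_qpa numeral_eq_Suc)
next
  fix x assume "x \<notin> L3"
  then have "\<not> (counter 0 x = 0 \<and> counter 1 x = 0)" "counter 2 x = counter 0 x + counter 1 x"
    using counter_letter_counts[of x] by (auto simp: L3_def)
  then show "rej_prob L3_qpa x \<ge> 2/3"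
    by (auto simp: rej_prob_L3_qpa numeral_eq_Suc)
qed

end
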